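(* Let $n\ge3$ and let $K_0:[0,\infty)\to[0,\infty)$ be bounded and continuous with $K_0(0)>0$. Then there is a constant $M>0$ such that every radially symmetric nonnegative $C^2$ solution $v$ of $$\Delta v+K_0(|x|)\,v^{\frac{n}{n-2}}=0\ \text{in }\mathbb{R}^n,\qquad \lim_{|x|\to\infty}v(x)=\beta,$$ with any $\beta>0$, satisfies $v\le M$ on $\mathbb{R}^n$; $M$ does not depend on $\beta$. *)

theory Defs
  imports "HOL-Analysis.Analysis"
begin

definition partial_deriv :: "(real^'n \<Rightarrow> real) \<Rightarrow> 'n \<Rightarrow> real^'n \<Rightarrow> real" where
  "partial_deriv f i x = deriv (\<lambda>t. f (x + t *\<^sub>R axis i 1)) 0"

definition C2_on_UNIV :: "(real^'n \<Rightarrow> real) \<Rightarrow> bool" where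
  "C2_on_UNIV f \<longleftrightarrow>
     continuous_on UNIV f \<and>
     (\<forall>i x. (\<lambda>t. f (x + t *\<^sub>R axis i 1)) differentiable (at 0)) \<and>
     (\<forall>i. continuous_on UNIV (partial_deriv f i)) \<and>
     (\<forall>i j x. (\<lambda>t. partial_deriv f i (x + t *\<^sub>R axis j 1)) differentiable (at 0)) \<and>
     (\<forall>i j. continuous_on UNIV (partial_deriv (partial_deriv f i) j))"

definition laplacian :: "(real^'n \<Rightarrow> real) \<Rightarrow> real^'n \<Rightarrow> real" where
  "laplacian f x = (\<Sum>i\<in>UNIV. partial_deriv (partial_deriv f i) i x)"

definition radially_symmetric :: "(real^'n \<Rightarrow> real) \<Rightarrow> bool" where
  "radially_symmetric f \<longleftrightarrow> (\<forall>x y. norm x = norm y \<longrightarrow> f x = f y)"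

end

theory Submission
  imports Defs
begin

text \<open>
  A radial solution is described by its profile \<open>\<phi>(t) = v(t e)\<close> and its flux
  \<open>w(t) = -t\<^sup>n\<^sup>-\<^sup>1 \<phi>'(t)\<close>, which satisfy \<open>w' = t\<^sup>n\<^sup>-\<^sup>1 K \<phi>\<^sup>p\<close>, \<open>w(0) = 0\<close>: the flux
  grows and the profile decreases.  The bound on \<open>\<phi>(0)\<close> comes from a blow-up argument:
  if \<open>a = \<phi>(0)\<close> is large, then at the scale \<open>\<rho> = \<theta> a\<^sup>-\<^sup>1\<^sup>/\<^sup>(\<^sup>n\<^sup>-\<^sup>2\<^sup>)\<close> the flux is already
  bounded below by a constant independent of \<open>a\<close> (scale invariance of the critical exponent),
  and every doubling of the radius inside the region where \<open>K \<ge> k > 0\<close> adds a fixed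
  amount to the flux.  After sufficiently many doublings the flux at a fixed radius \<open>\<delta>\<close>
  would exceed an upper bound for \<open>w(\<delta>)\<close> valid for all solutions, a contradiction.
\<close>

lemma mvt_open_interval:
  fixes f f' :: "real \<Rightarrow> real"
  assumes "a < b" "continuous_on {a..b} f"
    "\<And>x. a < x \<Longrightarrow> x < b \<Longrightarrow> (f has_real_derivative f' x) (at x)"
  shows "\<exists>z. a < z \<and> z < b \<and> f b - f a = (b - a) * f' z"
proof -
  obtain l z where "a < z" "z < b" "DERIV f z :> l" "f b - f a = (b - a) * l"
    using MVT[OF assms(1,2)] assms(3) real_differentiable_def by blast
  moreover have "l = f' z" using DERIV_unique calculation assms(3) by blast
  ultimately show ?thesis by blast
qed

locale radial_flux =
  fixes n :: nat and K :: "real \<Rightarrow> real" and p :: real and \<phi> w :: "real \<Rightarrow> real"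
  assumes K_nonneg: "\<And>t. t \<ge> 0 \<Longrightarrow> K t \<ge> 0"
    and p_nonneg: "p \<ge> 0"
    and phi_nonneg: "\<And>t. t \<ge> 0 \<Longrightarrow> \<phi> t \<ge> 0"
    and phi_cont: "continuous_on {0..} \<phi>"
    and w_cont: "continuous_on {0..} w"
    and w_zero: "w 0 = 0"
    and phi_deriv: "\<And>t. t > 0 \<Longrightarrow> (\<phi> has_real_derivative -(w t / t^(n-1))) (at t)"
    and w_deriv: "\<And>t. t > 0 \<Longrightarrow> (w has_real_derivative t^(n-1) * K t * \<phi> t powr p) (at t)"
begin

lemma phi_cont_on: "0 \<le> x \<Longrightarrow> continuous_on {x..y} \<phi>"
  by (rule continuous_on_subset[OF phi_cont]) auto

lemma w_cont_on: "0 \<le> x \<Longrightarrow> continuous_on {x..y} w"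
  by (rule continuous_on_subset[OF w_cont]) auto

lemma w_mono:
  assumes "0 \<le> x" "x \<le> y"
  shows "w x \<le> w y"
proof (rule DERIV_nonneg_imp_increasing_open[OF assms(2) _ w_cont_on[OF assms(1)]])
  fix t assume "x < t" "t < y"
  then have "t > 0" using assms by simp
  then show "\<exists>d. (w has_real_derivative d) (at t) \<and> d \<ge> 0"
    using w_deriv K_nonneg phi_nonneg by fastforce
qed

lemma w_nonneg: "t \<ge> 0 \<Longrightarrow> w t \<ge> 0"
  using w_mono[of 0 t] w_zero by simp

lemma phi_antimono:
  assumes "0 \<le> x" "x \<le> y"
  shows "\<phi> y \<le> \<phi> x"
proof (rule DERIV_nonpos_imp_decreasing_open[OF assms(2) _ phi_cont_on[OF assms(1)]])
  fix t assume "x < t" "t < y"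
  then have "t > 0" using assms by simp
  then show "\<exists>d. (\<phi> has_real_derivative d) (at t) \<and> d \<le> 0"
    using phi_deriv w_nonneg by fastforce
qed

text \<open>Upper bound of the flux by the profile: integrating \<open>\<phi>'\<close> over \<open>[r, 2r]\<close> and using
  \<open>\<phi>(2r) \<ge> 0\<close> gives \<open>r w(r) \<le> (2r)\<^sup>n\<^sup>-\<^sup>1 \<phi>(r)\<close>.\<close>
lemma flux_le_profile:
  assumes "r > 0"
  shows "r * w r \<le> (2*r)^(n-1) * \<phi> r"
proof -
  obtain z where z: "r < z" "z < 2*r" "\<phi> (2*r) - \<phi> r = (2*r - r) * (-(w z / z^(n-1)))"
    using mvt_open_interval[of r "2*r" \<phi> "\<lambda>t. -(w t / t^(n-1))"] assms phi_cont_on phi_deriv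
    by auto
  have "r * (w z / z^(n-1)) \<le> \<phi> r" using z phi_nonneg[of "2*r"] assms by simp
  moreover have "w r / (2*r)^(n-1) \<le> w z / z^(n-1)"
  proof (rule frac_le)
    show "0 \<le> w z" "w r \<le> w z" using w_nonneg w_mono z assms by auto
    show "0 < z^(n-1)" using z assms by simp
    show "z^(n-1) \<le> (2*r)^(n-1)" using z assms by (intro power_mono) auto
  qed
  ultimately have "r * (w r / (2*r)^(n-1)) \<le> \<phi> r"
    using assms by (meson mult_left_mono less_imp_le order_trans)
  then show ?thesis using assms by (simp add: field_simps)
qed

lemma flux_increment_lower:
  assumes "0 < x" "x < y" "k \<ge> 0" and K_lower: "\<And>t. x < t \<Longrightarrow> t < y \<Longrightarrow> k \<le> K t"
  shows "(y - x) * (x^(n-1) * k * \<phi> y powr p) \<le> w y - w x"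
proof -
  obtain z where z: "x < z" "z < y" "w y - w x = (y - x) * (z^(n-1) * K z * \<phi> z powr p)"
    using mvt_open_interval[of x y w "\<lambda>t. t^(n-1) * K t * \<phi> t powr p"] assms w_cont_on w_deriv by auto
  have "\<phi> y powr p \<le> \<phi> z powr p"
    using phi_antimono[of z y] phi_nonneg[of y] z assms p_nonneg by (intro powr_mono2) auto
  moreover have "x^(n-1) \<le> z^(n-1)" using z assms by (auto intro!: power_mono)
  ultimately have "x^(n-1) * k * \<phi> y powr p \<le> z^(n-1) * K z * \<phi> z powr p"
    using K_lower z assms K_nonneg by (intro mult_mono) auto
  then show ?thesis using z assms by (simp add: mult_left_mono)
qed

lemma flux_half_lower:
  assumes "n \<ge> 1" "r > 0" "k \<ge> 0" and K_lower: "\<And>t. r/2 < t \<Longrightarrow> t < r \<Longrightarrow> k \<le> K t"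
  shows "(r/2)^n * k * \<phi> r powr p \<le> w r"
proof -
  have "(r - r/2) * ((r/2)^(n-1) * k * \<phi> r powr p) \<le> w r - w (r/2)"
    using flux_increment_lower[of "r/2" r k] assms by simp
  moreover have "(r - r/2) * ((r/2)^(n-1) * k * \<phi> r powr p) = (r/2)^n * k * \<phi> r powr p"
  proof -
    have "(r - r/2) * (r/2)^(n-1) = (r/2)^n"
      using assms(1) by (cases n) auto
    then show ?thesis by (metis mult.assoc)
  qed
  moreover have "w (r/2) \<ge> 0" using w_nonneg assms by simp
  ultimately show ?thesis by linarith
qed

lemma profile_drop_upper:
  assumes "r > 0" and K_upper: "\<And>t. 0 < t \<Longrightarrow> t < r \<Longrightarrow> K t \<le> B"
  shows "\<phi> 0 - \<phi> r \<le> r^2 * (B * \<phi> 0 powr p)"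
proof -
  obtain z where z: "0 < z" "z < r" "\<phi> r - \<phi> 0 = (r - 0) * (-(w z / z^(n-1)))"
    using mvt_open_interval[of 0 r \<phi> "\<lambda>t. -(w t / t^(n-1))"] assms phi_cont_on phi_deriv
    by auto
  obtain e where e: "0 < e" "e < z" "w z - w 0 = (z - 0) * (e^(n-1) * K e * \<phi> e powr p)"
    using mvt_open_interval[of 0 z w "\<lambda>t. t^(n-1) * K t * \<phi> t powr p"] z w_cont_on w_deriv by auto
  have "\<phi> e powr p \<le> \<phi> 0 powr p"
    using phi_antimono[of 0 e] phi_nonneg[of e] e p_nonneg by (intro powr_mono2) auto
  moreover have "e^(n-1) \<le> z^(n-1)" using e by (auto intro!: power_mono)
  moreover have "0 \<le> K e" "K e \<le> B" using K_nonneg K_upper e z by auto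
  ultimately have "e^(n-1) * K e * \<phi> e powr p \<le> z^(n-1) * B * \<phi> 0 powr p"
    using e by (intro mult_mono) auto
  then have "w z \<le> z * (z^(n-1) * B * \<phi> 0 powr p)" using e w_zero by (simp add: mult_left_mono)
  then have "w z / z^(n-1) \<le> z * (B * \<phi> 0 powr p)" using z by (simp add: field_simps)
  also have "\<dots> \<le> r * (B * \<phi> 0 powr p)"
    using z \<open>0 \<le> K e\<close> \<open>K e \<le> B\<close> by (intro mult_right_mono) auto
  finally have "r * (w z / z^(n-1)) \<le> r * (r * (B * \<phi> 0 powr p))"
    using assms by (intro mult_left_mono) auto
  then show ?thesis using z by (simp add: power2_eq_square)
qed


text \<open>Combining the two bounds on \<open>w(\<delta>)\<close> bounds \<open>\<phi>(\<delta>)\<close>, and hence \<open>w(\<delta>)\<close>, by a constant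
  that is the same for all solutions (here \<open>p > 1\<close> matters).\<close>
lemma flux_bound_at:
  assumes "n \<ge> 1" "\<delta> > 0" "k > 0" "p > 1" and K_lower: "\<And>t. \<delta>/2 < t \<Longrightarrow> t < \<delta> \<Longrightarrow> k \<le> K t"
  shows "w \<delta> \<le> (2*\<delta>)^(n-1) / \<delta> * ((2*\<delta>)^(n-1) / \<delta> / ((\<delta>/2)^n * k)) powr (1/(p-1))"
proof -
  define A where "A = (2*\<delta>)^(n-1) / \<delta>"
  have A_pos: "A > 0" unfolding A_def using assms by simp
  have upper: "w \<delta> \<le> A * \<phi> \<delta>"
    using flux_le_profile[OF assms(2)] assms(2) unfolding A_def by (simp add: field_simps)
  have "\<phi> \<delta> \<le> (A / ((\<delta>/2)^n * k)) powr (1/(p-1))"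
  proof (cases "\<phi> \<delta> = 0")
    case False
    then have pos: "\<phi> \<delta> > 0" using phi_nonneg[of \<delta>] assms by simp
    have "(\<delta>/2)^n * k * \<phi> \<delta> powr p \<le> A * \<phi> \<delta>"
      using flux_half_lower[OF assms(1,2) _ K_lower] assms upper by linarith
    moreover have "\<phi> \<delta> powr p = \<phi> \<delta> * \<phi> \<delta> powr (p-1)"
      using powr_add[of "\<phi> \<delta>" 1 "p-1"] pos by simp
    ultimately have "\<phi> \<delta> * ((\<delta>/2)^n * k * \<phi> \<delta> powr (p-1)) \<le> \<phi> \<delta> * A"
      by (simp add: algebra_simps)
    then have "(\<delta>/2)^n * k * \<phi> \<delta> powr (p-1) \<le> A" using pos by simp
    then have "\<phi> \<delta> powr (p-1) \<le> A / ((\<delta>/2)^n * k)"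
      using assms by (simp add: pos_le_divide_eq mult.commute)
    then have "(\<phi> \<delta> powr (p-1)) powr (1/(p-1)) \<le> (A / ((\<delta>/2)^n * k)) powr (1/(p-1))"
      using assms by (intro powr_mono2) auto
    then show ?thesis using pos assms by (simp add: powr_powr)
  qed simp
  then show ?thesis using upper A_pos unfolding A_def[symmetric]
    by (meson mult_left_mono less_imp_le order_trans)
qed

text \<open>Scale-invariant gain: for the critical exponent \<open>(n - 2) p = n\<close>, once \<open>w(r) \<ge> c\<close> the
  flux increases on \<open>[r, 2r]\<close> by an amount depending only on \<open>c\<close>, \<open>k\<close> and \<open>n\<close>.\<close>
lemma flux_doubling_gain:
  assumes "n \<ge> 2" "(real n - 2) * p = real n" "r > 0" "k \<ge> 0" "c \<ge> 0" "c \<le> w r"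
    and K_lower: "\<And>t. r < t \<Longrightarrow> t < 2*r \<Longrightarrow> k \<le> K t"
  shows "k * (2 * c / 4^(n-1)) powr p \<le> w (2*r) - w r"
proof -
  define c2 where "c2 = 2 * c / 4^(n-1)"
  have c2_nonneg: "c2 \<ge> 0" unfolding c2_def using assms by simp
  have "n - 1 = Suc (n - 2)" "n = Suc (n - 1)" using assms(1) by auto
  then have r_pow: "r^(n-1) = r * r^(n-2)" "r^n = r * r^(n-1)"
    by (metis power_Suc)+
  have "2*r*c \<le> 2*r * w (2*r)"
    using assms w_mono[of r "2*r"] by (intro mult_left_mono) auto
  also have "\<dots> \<le> (4*r)^(n-1) * \<phi> (2*r)"
    using flux_le_profile[of "2*r"] assms by simp
  finally have "2*r*c / (4*r)^(n-1) \<le> \<phi> (2*r)"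
    using assms by (simp add: pos_divide_le_eq mult.commute)
  moreover have "2*r*c / (4*r)^(n-1) = c2 / r^(n-2)"
    unfolding c2_def power_mult_distrib r_pow(1) using assms by (simp add: field_simps)
  ultimately have "(c2 / r^(n-2)) powr p \<le> \<phi> (2*r) powr p"
    using c2_nonneg assms p_nonneg by (intro powr_mono2) auto
  moreover have "(c2 / r^(n-2)) powr p = c2 powr p / r^n"
  proof -
    have "(r^(n-2)) powr p = (r powr (real n - 2)) powr p"
      using assms powr_realpow[of r "n-2"] by simp
    also have "\<dots> = r powr ((real n - 2) * p)" by (simp add: powr_powr)
    also have "\<dots> = r^n" using assms by (simp add: powr_realpow)
    finally show ?thesis by (simp add: powr_divide)
  qed
  ultimately have "(2*r - r) * (r^(n-1) * k * (c2 powr p / r^n))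
      \<le> (2*r - r) * (r^(n-1) * k * \<phi> (2*r) powr p)"
    using assms by (intro mult_left_mono) auto
  also have "\<dots> \<le> w (2*r) - w r"
    using flux_increment_lower[of r "2*r" k] assms by simp
  finally show ?thesis
    unfolding c2_def[symmetric] using assms r_pow(2) by (simp add: field_simps)
qed


lemma flux_iterated_gain:
  assumes "n \<ge> 2" "(real n - 2) * p = real n" "\<rho> > 0" "k \<ge> 0" "c \<ge> 0" "c \<le> w \<rho>"
    and K_lower: "\<And>t. \<rho> < t \<Longrightarrow> t < \<delta> \<Longrightarrow> k \<le> K t"
  shows "\<rho> * 2^j \<le> \<delta> \<Longrightarrow> real j * (k * (2 * c / 4^(n-1)) powr p) \<le> w (\<rho> * 2^j)"
proof (induction j)
  case 0
  then show ?case using w_nonneg assms by simp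
next
  case (Suc j)
  define r where "r = \<rho> * 2^j"
  have "\<rho> \<le> r" "2 * r \<le> \<delta>"
    using Suc.prems assms(3) unfolding r_def by (auto simp: mult_ac)
  then have "r \<le> \<delta>" using assms(3) by linarith
  have "k * (2 * c / 4^(n-1)) powr p \<le> w (2*r) - w r"
  proof (rule flux_doubling_gain)
    show "c \<le> w r" using assms w_mono[of \<rho> r] \<open>\<rho> \<le> r\<close> by simp
    show "\<And>t. r < t \<Longrightarrow> t < 2*r \<Longrightarrow> k \<le> K t"
      using K_lower \<open>\<rho> \<le> r\<close> \<open>2 * r \<le> \<delta>\<close> by simp
  qed (use assms \<open>\<rho> \<le> r\<close> in auto)
  moreover have "real j * (k * (2 * c / 4^(n-1)) powr p) \<le> w r"
    using Suc.IH \<open>r \<le> \<delta>\<close> unfolding r_def by blast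
  moreover have "w (\<rho> * 2^Suc j) = w (2*r)" unfolding r_def by (simp add: mult_ac)
  moreover have "real (Suc j) * (k * (2 * c / 4^(n-1)) powr p)
      = real j * (k * (2 * c / 4^(n-1)) powr p) + k * (2 * c / 4^(n-1)) powr p"
    by (simp add: algebra_simps)
  ultimately show ?case by linarith
qed

text \<open>If \<open>\<rho>\<^sup>2 B \<phi>(0)\<^sup>p\<^sup>-\<^sup>1\<close> is small, the profile is still at least \<open>\<phi>(0)/2\<close> at \<open>\<rho>\<close>,
  which forces a definite flux at \<open>\<rho>\<close>.\<close>
lemma flux_near_origin:
  assumes "n \<ge> 1" "\<rho> > 0" "\<phi> 0 > 0" "k \<ge> 0"
    and K_upper: "\<And>t. 0 < t \<Longrightarrow> t < \<rho> \<Longrightarrow> K t \<le> B"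
    and K_lower: "\<And>t. \<rho>/2 < t \<Longrightarrow> t < \<rho> \<Longrightarrow> k \<le> K t"
    and small: "\<rho>^2 * B * \<phi> 0 powr (p - 1) \<le> 1/2"
  shows "(\<rho>/2)^n * k * (\<phi> 0 / 2) powr p \<le> w \<rho>"
proof -
  have "\<phi> 0 - \<phi> \<rho> \<le> \<rho>^2 * (B * \<phi> 0 powr p)"
    using profile_drop_upper[OF assms(2) K_upper] by blast
  also have "\<dots> = (\<rho>^2 * B * \<phi> 0 powr (p - 1)) * \<phi> 0"
    using powr_add[of "\<phi> 0" "p-1" 1] assms(3) by simp
  also have "\<dots> \<le> 1/2 * \<phi> 0"
    using small assms(3) by (intro mult_right_mono) auto
  finally have "\<phi> 0 / 2 \<le> \<phi> \<rho>" by simp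
  then have "(\<phi> 0 / 2) powr p \<le> \<phi> \<rho> powr p"
    using p_nonneg assms(3) by (intro powr_mono2) auto
  then have "(\<rho>/2)^n * k * (\<phi> 0 / 2) powr p \<le> (\<rho>/2)^n * k * \<phi> \<rho> powr p"
    using assms by (intro mult_left_mono) auto
  also have "\<dots> \<le> w \<rho>" using flux_half_lower[OF assms(1,2,4) K_lower] .
  finally show ?thesis .
qed


lemma flux_lower_bound_scaled:
  assumes n3: "n \<ge> 3" and p_def: "p = real n / (real n - 2)"
    and a_pos: "\<phi> 0 > 0" and "\<theta> > 0" "k \<ge> 0" and small: "\<theta>^2 * B \<le> 1/2"
    and K_upper: "\<And>t. t \<ge> 0 \<Longrightarrow> K t \<le> B"
    and K_lower: "\<And>t. 0 < t \<Longrightarrow> t < \<theta> * \<phi> 0 powr (-1 / (real n - 2)) \<Longrightarrow> k \<le> K t"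
  shows "(\<theta>/2)^n * k / 2 powr p \<le> w (\<theta> * \<phi> 0 powr (-1 / (real n - 2)))"
proof -
  define a where "a = \<phi> 0"
  define q where "q = 1 / (real n - 2)"
  define \<rho> where "\<rho> = \<theta> * a powr (-q)"
  have exps: "p - 1 = 2 * q" "real n * q = p" unfolding p_def q_def using n3 by (auto simp: field_simps)
  have \<rho>_pos: "\<rho> > 0" unfolding \<rho>_def using assms a_def by simp
  have "(a powr (-q))^2 * a powr (2 * q) = 1"
    using a_pos unfolding a_def by (simp add: powr_realpow[symmetric] powr_powr powr_add[symmetric])
  then have "\<rho>^2 * B * a powr (p - 1) = \<theta>^2 * B"
    unfolding \<rho>_def exps by (simp add: power_mult_distrib mult_ac)
  then have "\<rho>^2 * B * \<phi> 0 powr (p - 1) \<le> 1/2" using small unfolding a_def by linarith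
  then have "(\<rho>/2)^n * k * (a / 2) powr p \<le> w \<rho>"
    using flux_near_origin[OF _ \<rho>_pos a_pos \<open>k \<ge> 0\<close>, of B] n3 K_upper K_lower
    unfolding a_def \<rho>_def q_def by force
  moreover have "(\<rho>/2)^n * k * (a / 2) powr p = (\<theta>/2)^n * k / 2 powr p"
  proof -
    have "(a powr (-q))^n * a powr p = 1"
      using a_pos unfolding a_def exps(2)[symmetric]
      by (simp add: powr_realpow[symmetric] powr_powr powr_add[symmetric])
    then show ?thesis using a_pos unfolding \<rho>_def a_def
      by (simp add: powr_divide field_simps)
  qed
  ultimately show ?thesis unfolding \<rho>_def a_def q_def by simp
qed

text \<open>Suppose the flux at \<open>\<delta>\<close> stays below the total gain of \<open>J\<close>
  doublings started from the scale-invariant lower bound.  If \<open>\<phi>(0)\<close> were large, then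
  \<open>J\<close> doublings of \<open>\<rho> = \<theta> \<phi>(0)\<^sup>-\<^sup>1\<^sup>/\<^sup>(\<^sup>n\<^sup>-\<^sup>2\<^sup>)\<close> would stay inside \<open>[0, \<delta>]\<close> and push the flux at \<open>\<delta>\<close>
  above that gain.\<close>
lemma profile_height_bound:
  assumes n3: "n \<ge> 3" and p_def: "p = real n / (real n - 2)"
    and k_pos: "k > 0" and \<delta>_pos: "\<delta> > 0" and \<theta>_pos: "\<theta> > 0" and small: "\<theta>^2 * B \<le> 1/2"
    and K_upper: "\<And>t. t \<ge> 0 \<Longrightarrow> K t \<le> B" and K_lower: "\<And>t. 0 \<le> t \<Longrightarrow> t \<le> \<delta> \<Longrightarrow> k \<le> K t"
    and few_doublings: "w \<delta> < real J * (k * (2 * ((\<theta>/2)^n * k / 2 powr p) / 4^(n-1)) powr p)"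
  shows "\<phi> 0 \<le> max 1 ((\<theta> * 2^J / \<delta>) powr (real n - 2))"
proof (rule ccontr)
  define c0 where "c0 = (\<theta>/2)^n * k / 2 powr p"
  define \<rho> where "\<rho> = \<theta> * \<phi> 0 powr (-1 / (real n - 2))"
  assume "\<not> ?thesis"
  then have a_big: "(\<theta> * 2^J / \<delta>) powr (real n - 2) < \<phi> 0" and a_pos: "\<phi> 0 > 0" by auto
  have \<rho>_pos: "\<rho> > 0" unfolding \<rho>_def using \<theta>_pos a_pos by simp
  have "((\<theta> * 2^J / \<delta>) powr (real n - 2)) powr (1 / (real n - 2)) < \<phi> 0 powr (1 / (real n - 2))"
    using a_big n3 by (intro powr_less_mono2) auto
  then have "\<theta> * 2^J / \<delta> < \<phi> 0 powr (1 / (real n - 2))"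
    using \<theta>_pos \<delta>_pos n3 by (simp add: powr_powr)
  then have \<rho>_far: "\<rho> * 2^J \<le> \<delta>"
    unfolding \<rho>_def using \<delta>_pos a_pos by (simp add: powr_minus_divide field_simps)
  moreover have "\<rho> \<le> \<rho> * 2^J" using \<rho>_pos by simp
  ultimately have "c0 \<le> w \<rho>"
    using flux_lower_bound_scaled[OF n3 p_def a_pos \<theta>_pos _ small K_upper] k_pos K_lower
    unfolding c0_def \<rho>_def by force
  then have "real J * (k * (2 * c0 / 4^(n-1)) powr p) \<le> w (\<rho> * 2^J)"
  proof (intro flux_iterated_gain[where \<delta> = \<delta>])
    show "(real n - 2) * p = real n" unfolding p_def using n3 by simp
    show "\<And>t. \<rho> < t \<Longrightarrow> t < \<delta> \<Longrightarrow> k \<le> K t" using K_lower \<rho>_pos by simp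
  qed (use n3 \<rho>_pos k_pos \<theta>_pos \<rho>_far in \<open>auto simp: c0_def\<close>)
  also have "\<dots> \<le> w \<delta>" using w_mono \<rho>_far \<rho>_pos by simp
  finally show False using few_doublings unfolding c0_def by simp
qed

end

text \<open>The number \<open>J\<close> of doublings
  is chosen so that their total gain exceeds the uniform bound on the flux at \<open>\<delta>\<close>.\<close>
lemma radial_flux_profile_bounded:
  fixes K :: "real \<Rightarrow> real" and n :: nat and B k \<delta> :: real
  assumes n3: "n \<ge> 3" and k_pos: "k > 0" and \<delta>_pos: "\<delta> > 0"
    and K_upper: "\<And>t. t \<ge> 0 \<Longrightarrow> K t \<le> B" and K_lower: "\<And>t. 0 \<le> t \<Longrightarrow> t \<le> \<delta> \<Longrightarrow> k \<le> K t"
  shows "\<exists>M>0. \<forall>\<phi> w. radial_flux n K (real n / (real n - 2)) \<phi> w \<longrightarrow> (\<forall>t\<ge>0. \<phi> t \<le> M)"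
proof -
  define p where "p = real n / (real n - 2)"
  have p_gt1: "p > 1" unfolding p_def using n3 by (auto simp: field_simps)
  have B_pos: "B > 0" using K_upper[of 0] K_lower[of 0] k_pos \<delta>_pos by simp
  define \<theta> where "\<theta> = 1 / (2*B + 2)"
  have \<theta>_pos: "\<theta> > 0" unfolding \<theta>_def using B_pos by simp
  have \<theta>_small: "\<theta>^2 * B \<le> 1/2"
  proof -
    have "\<theta> * B \<le> 1/2" "\<theta> \<le> 1/2" unfolding \<theta>_def using B_pos by (auto simp: field_simps)
    then have "\<theta> * (\<theta> * B) \<le> 1/2 * 1" using \<theta>_pos B_pos by (intro mult_mono) auto
    then show ?thesis by (simp add: power2_eq_square mult.assoc)
  qed
  define E where "E = (2*\<delta>)^(n-1) / \<delta> * ((2*\<delta>)^(n-1) / \<delta> / ((\<delta>/2)^n * k)) powr (1/(p-1))"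
  define \<gamma> where "\<gamma> = k * (2 * ((\<theta>/2)^n * k / 2 powr p) / 4^(n-1)) powr p"
  define J where "J = nat \<lceil>E / \<gamma>\<rceil> + 1"
  have "\<gamma> > 0" unfolding \<gamma>_def using \<theta>_pos k_pos by simp
  moreover have "E / \<gamma> < real J" unfolding J_def by linarith
  ultimately have E_lt: "E < real J * \<gamma>" by (simp add: field_simps)
  show ?thesis unfolding p_def[symmetric]
  proof (intro exI[of _ "max 1 ((\<theta> * 2^J / \<delta>) powr (real n - 2))"] conjI allI impI)
    fix \<phi> w :: "real \<Rightarrow> real" and t :: real assume flux: "radial_flux n K p \<phi> w" and "t \<ge> 0"
    have "w \<delta> \<le> E"
      unfolding E_def using radial_flux.flux_bound_at[OF flux _ \<delta>_pos k_pos p_gt1] n3 K_lower by simp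
    then have "\<phi> 0 \<le> max 1 ((\<theta> * 2^J / \<delta>) powr (real n - 2))"
      using radial_flux.profile_height_bound[OF flux n3 p_def k_pos \<delta>_pos \<theta>_pos \<theta>_small K_upper K_lower]
        E_lt unfolding \<gamma>_def by simp
    then show "\<phi> t \<le> max 1 ((\<theta> * 2^J / \<delta>) powr (real n - 2))"
      using radial_flux.phi_antimono[OF flux, of 0 t] \<open>t \<ge> 0\<close> by simp
  qed simp
qed

lemma partial_deriv_along_line:
  fixes f :: "real^'n \<Rightarrow> real"
  assumes "\<And>x. (\<lambda>t. f (x + t *\<^sub>R axis i 1)) differentiable (at 0)"
  shows "((\<lambda>s. f (y + s *\<^sub>R axis i 1)) has_real_derivative partial_deriv f i (y + s *\<^sub>R axis i 1)) (at s)"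
proof -
  have "((\<lambda>t. f ((y + s *\<^sub>R axis i 1) + t *\<^sub>R axis i 1))
      has_real_derivative partial_deriv f i (y + s *\<^sub>R axis i 1)) (at 0)"
    using assms unfolding partial_deriv_def by (simp add: DERIV_deriv_iff_real_differentiable)
  moreover have "(\<lambda>t. f ((y + s *\<^sub>R axis i 1) + t *\<^sub>R axis i 1)) = (\<lambda>t. f (y + (t + s) *\<^sub>R axis i 1))"
    by (simp add: scaleR_add_left add_ac)
  ultimately have "((\<lambda>t. f (y + (t + s) *\<^sub>R axis i 1))
      has_real_derivative partial_deriv f i (y + s *\<^sub>R axis i 1)) (at 0)"
    by simp
  then have "((\<lambda>s. f (y + s *\<^sub>R axis i 1))
      has_real_derivative partial_deriv f i (y + s *\<^sub>R axis i 1)) (at (0 + s))"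
    unfolding DERIV_shift by simp
  then show ?thesis by simp
qed

lemma norm_two_axis:
  fixes t u :: real
  assumes "i \<noteq> j"
  shows "norm (t *\<^sub>R axis i 1 + u *\<^sub>R axis j (1::real) :: real^'n) = sqrt (t^2 + u^2)"
proof -
  have "inner (t *\<^sub>R axis i 1 + u *\<^sub>R axis j (1::real)) (t *\<^sub>R axis i 1 + u *\<^sub>R axis j (1::real) :: real^'n)
      = t^2 + u^2"
    using assms by (simp add: inner_add_left inner_add_right inner_axis_axis power2_eq_square)
  then show ?thesis by (simp only: norm_eq_sqrt_inner)
qed

lemma radial_profile:
  fixes v :: "real^'n \<Rightarrow> real"
  assumes "radially_symmetric v"
  shows "v x = v (norm x *\<^sub>R axis i 1)"
  using assms[unfolded radially_symmetric_def, rule_format, of x "norm x *\<^sub>R axis i 1"] by simp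

lemma partial_deriv_radial_transversal:
  fixes v :: "real^'n \<Rightarrow> real"
  assumes rad: "radially_symmetric v"
    and dv: "\<And>x. (\<lambda>t. v (x + t *\<^sub>R axis i 1)) differentiable (at 0)"
    and "j \<noteq> i" "t > 0"
  shows "partial_deriv v j (t *\<^sub>R axis i 1 + s *\<^sub>R axis j 1)
       = partial_deriv v i (sqrt (t^2 + s^2) *\<^sub>R axis i 1) * (s / sqrt (t^2 + s^2))"
proof -
  define R where "R = (\<lambda>s::real. sqrt (t^2 + s^2))"
  have R_pos: "R s > 0" for s unfolding R_def using \<open>t > 0\<close> by (simp add: add_pos_nonneg)
  have line: "(\<lambda>h. v ((t *\<^sub>R axis i 1 + s *\<^sub>R axis j 1) + h *\<^sub>R axis j 1))
      = (\<lambda>h. v (R (s + h) *\<^sub>R axis i 1))"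
  proof
    fix h
    define x where "x = (t *\<^sub>R axis i 1 + s *\<^sub>R axis j 1) + h *\<^sub>R axis j (1::real)"
    have "x = t *\<^sub>R axis i 1 + (s + h) *\<^sub>R axis j (1::real)"
      unfolding x_def by (simp add: scaleR_add_left add.assoc)
    then have "norm x = R (s + h)"
      unfolding R_def using norm_two_axis[OF \<open>j \<noteq> i\<close>[symmetric]] by simp
    moreover have "v x = v (norm x *\<^sub>R axis i 1)" by (rule radial_profile[OF rad])
    ultimately show "v ((t *\<^sub>R axis i 1 + s *\<^sub>R axis j 1) + h *\<^sub>R axis j 1) = v (R (s + h) *\<^sub>R axis i 1)"
      unfolding x_def by simp
  qed
  have "((\<lambda>h. t^2 + (s + h)^2) has_real_derivative 2 * s) (at 0)"
    by (auto intro!: derivative_eq_intros)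
  moreover have "(sqrt has_real_derivative inverse (R s) / 2) (at ((\<lambda>h. t^2 + (s + h)^2) 0))"
    using DERIV_real_sqrt[of "t^2 + s^2"] R_pos[of s] unfolding R_def by simp
  ultimately have "((\<lambda>h. R (s + h)) has_real_derivative inverse (R s) / 2 * (2 * s)) (at 0)"
    unfolding R_def by (rule DERIV_chain2[rotated])
  then have R_deriv: "((\<lambda>h. R (s + h)) has_real_derivative s / R s) (at 0)"
    by (simp add: field_simps)
  have profile_deriv: "((\<lambda>r. v (r *\<^sub>R axis i 1))
      has_real_derivative partial_deriv v i (R s *\<^sub>R axis i 1)) (at ((\<lambda>h. R (s + h)) 0))"
    using partial_deriv_along_line[OF dv, of 0] by simp
  have "((\<lambda>h. v (R (s + h) *\<^sub>R axis i 1)) has_real_derivative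
      partial_deriv v i (R s *\<^sub>R axis i 1) * (s / R s)) (at 0)"
    using DERIV_chain2[OF profile_deriv R_deriv] by simp
  then have "deriv (\<lambda>h. v (R (s + h) *\<^sub>R axis i 1)) 0 = partial_deriv v i (R s *\<^sub>R axis i 1) * (s / R s)"
    by (rule DERIV_imp_deriv)
  then have "partial_deriv v j (t *\<^sub>R axis i 1 + s *\<^sub>R axis j 1) = partial_deriv v i (R s *\<^sub>R axis i 1) * (s / R s)"
    unfolding partial_deriv_def[of v j] line .
  then show ?thesis unfolding R_def .
qed

lemma second_partial_deriv_radial_transversal:
  fixes v :: "real^'n \<Rightarrow> real"
  assumes rad: "radially_symmetric v"
    and dv: "\<And>x. (\<lambda>t. v (x + t *\<^sub>R axis i 1)) differentiable (at 0)"
    and dG: "\<And>x. (\<lambda>t. partial_deriv v i (x + t *\<^sub>R axis i 1)) differentiable (at 0)"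
    and "j \<noteq> i" "t > 0"
  shows "partial_deriv (partial_deriv v j) j (t *\<^sub>R axis i 1) = partial_deriv v i (t *\<^sub>R axis i 1) / t"
proof -
  define G where "G r = partial_deriv v i (r *\<^sub>R axis i 1)" for r
  define R where "R s = sqrt (t^2 + s^2)" for s
  have R0: "R 0 = t" unfolding R_def using \<open>t > 0\<close> by simp
  have transversal: "(\<lambda>s. partial_deriv v j (t *\<^sub>R axis i 1 + s *\<^sub>R axis j 1)) = (\<lambda>s. G (R s) * (s / R s))"
    using partial_deriv_radial_transversal[OF rad dv \<open>j \<noteq> i\<close> \<open>t > 0\<close>] unfolding G_def R_def by simp
  have "((\<lambda>s. t^2 + s^2) has_real_derivative 0) (at 0)"
    by (auto intro!: derivative_eq_intros)
  moreover have "(sqrt has_real_derivative inverse t / 2) (at ((\<lambda>s. t^2 + s^2) 0))"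
    using DERIV_real_sqrt[of "t^2"] \<open>t > 0\<close> by simp
  ultimately have R_deriv: "(R has_real_derivative 0) (at 0)"
    unfolding R_def using DERIV_chain2 by fastforce
  have "(G has_real_derivative partial_deriv (partial_deriv v i) i (t *\<^sub>R axis i 1)) (at (R 0))"
    using partial_deriv_along_line[OF dG, of 0 t] R0 unfolding G_def by simp
  from DERIV_chain2[OF this R_deriv]
  have "((\<lambda>s. G (R s)) has_real_derivative 0) (at 0)" by simp
  moreover have "((\<lambda>s. s / R s) has_real_derivative 1 / t) (at 0)"
    using DERIV_divide[OF DERIV_ident R_deriv] R0 \<open>t > 0\<close> by simp
  ultimately have "((\<lambda>s. G (R s) * (s / R s)) has_real_derivative G t / t) (at 0)"
    using DERIV_mult R0 by fastforce
  then have "deriv (\<lambda>s. G (R s) * (s / R s)) 0 = G t / t" by (rule DERIV_imp_deriv)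
  then show ?thesis unfolding partial_deriv_def[of "partial_deriv v j"] transversal
    by (simp add: G_def)
qed

lemma laplacian_radial:
  fixes v :: "real^'n \<Rightarrow> real"
  assumes C2: "C2_on_UNIV v" and rad: "radially_symmetric v" and "t > 0"
  shows "laplacian v (t *\<^sub>R axis i 1)
       = partial_deriv (partial_deriv v i) i (t *\<^sub>R axis i 1)
         + (real CARD('n) - 1) * (partial_deriv v i (t *\<^sub>R axis i 1) / t)"
proof -
  have dv: "\<And>x. (\<lambda>t. v (x + t *\<^sub>R axis i 1)) differentiable (at 0)"
    and dG: "\<And>x. (\<lambda>t. partial_deriv v i (x + t *\<^sub>R axis i 1)) differentiable (at 0)"
    using C2 unfolding C2_on_UNIV_def by blast+
  have "laplacian v (t *\<^sub>R axis i 1) = partial_deriv (partial_deriv v i) i (t *\<^sub>R axis i 1)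
      + (\<Sum>j\<in>UNIV - {i}. partial_deriv (partial_deriv v j) j (t *\<^sub>R axis i 1))"
    unfolding laplacian_def by (rule sum.remove) auto
  also have "(\<Sum>j\<in>UNIV - {i}. partial_deriv (partial_deriv v j) j (t *\<^sub>R axis i 1))
      = (\<Sum>j\<in>UNIV - {i}. partial_deriv v i (t *\<^sub>R axis i 1) / t)"
    using second_partial_deriv_radial_transversal[OF rad dv dG _ \<open>t > 0\<close>] by (intro sum.cong) auto
  also have "\<dots> = (real CARD('n) - 1) * (partial_deriv v i (t *\<^sub>R axis i 1) / t)"
    by (simp add: card_Diff_singleton)
  finally show ?thesis .
qed

lemma radial_solution_flux:
  fixes v :: "real^'n \<Rightarrow> real" and K :: "real \<Rightarrow> real" and p :: real
  assumes n2: "CARD('n) \<ge> 2" and C2: "C2_on_UNIV v" and rad: "radially_symmetric v"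
    and v_nonneg: "\<And>x. v x \<ge> 0" and K_nonneg: "\<And>t. t \<ge> 0 \<Longrightarrow> K t \<ge> 0" and "p \<ge> 0"
    and pde: "\<And>x. laplacian v x + K (norm x) * v x powr p = 0"
  shows "radial_flux CARD('n) K p (\<lambda>t. v (t *\<^sub>R axis i 1))
           (\<lambda>t. -(t^(CARD('n) - 1) * partial_deriv v i (t *\<^sub>R axis i 1)))"
proof -
  define n where "n = CARD('n)"
  define G where "G r = partial_deriv v i (r *\<^sub>R axis i 1)" for r
  define H where "H r = partial_deriv (partial_deriv v i) i (r *\<^sub>R axis i 1)" for r
  have dv: "\<And>x. (\<lambda>t. v (x + t *\<^sub>R axis i 1)) differentiable (at 0)"
    and dG: "\<And>x. (\<lambda>t. partial_deriv v i (x + t *\<^sub>R axis i 1)) differentiable (at 0)"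
    and G_cont: "continuous_on UNIV (partial_deriv v i)"
    using C2 unfolding C2_on_UNIV_def by blast+
  have profile_deriv: "((\<lambda>t. v (t *\<^sub>R axis i 1)) has_real_derivative G r) (at r)" for r
    using partial_deriv_along_line[OF dv, of 0 r] unfolding G_def by simp
  have G_deriv: "(G has_real_derivative H r) (at r)" for r
    using partial_deriv_along_line[OF dG, of 0 r] unfolding G_def H_def by simp
  have w_deriv: "((\<lambda>t. -(t^(n-1) * G t)) has_real_derivative t^(n-1) * K t * v (t *\<^sub>R axis i 1) powr p) (at t)"
    if "t > 0" for t
  proof (rule DERIV_cong)
    show "((\<lambda>t. -(t^(n-1) * G t)) has_real_derivative
        -(real (n-1) * t^(n-1-1) * G t + H t * t^(n-1))) (at t)"
      using DERIV_minus[OF DERIV_mult[OF DERIV_pow[of "n-1" t] G_deriv[of t]]] by simp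
    have "H t + (real n - 1) * (G t / t) + K t * v (t *\<^sub>R axis i 1) powr p = 0"
      using pde[of "t *\<^sub>R axis i 1"] laplacian_radial[OF C2 rad that, of i] that
      unfolding n_def G_def H_def by simp
    then have source: "K t * v (t *\<^sub>R axis i 1) powr p = -(H t + (real n - 1) * (G t / t))"
      by linarith
    have "n - 1 = Suc (n - 1 - 1)" using n2 unfolding n_def by simp
    then have "t^(n-1) = t * t^(n-1-1)" by (metis power_Suc)
    then have t_pow: "t^(n-1) * (G t / t) = t^(n-1-1) * G t" using that by simp
    have "t^(n-1) * K t * v (t *\<^sub>R axis i 1) powr p = t^(n-1) * (K t * v (t *\<^sub>R axis i 1) powr p)"
      by (simp only: mult.assoc)
    also have "\<dots> = -(t^(n-1) * H t + (real n - 1) * (t^(n-1) * (G t / t)))"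
      unfolding source by (simp add: algebra_simps)
    also have "\<dots> = -(real (n-1) * t^(n-1-1) * G t + H t * t^(n-1))"
      using n2 unfolding t_pow by (simp add: n_def algebra_simps)
    finally show "-(real (n-1) * t^(n-1-1) * G t + H t * t^(n-1))
        = t^(n-1) * K t * v (t *\<^sub>R axis i 1) powr p"
      by simp
  qed
  show ?thesis unfolding n_def[symmetric] G_def[symmetric]
  proof (rule radial_flux.intro)
    show "continuous_on {0..} (\<lambda>t. v (t *\<^sub>R axis i 1))"
      using profile_deriv DERIV_isCont continuous_at_imp_continuous_on by blast
    show "continuous_on {0..} (\<lambda>t. -(t^(n-1) * G t))"
      unfolding G_def by (intro continuous_intros continuous_on_compose2[OF G_cont]) auto
  qed (use K_nonneg \<open>p \<ge> 0\<close> v_nonneg n2 profile_deriv w_deriv in \<open>auto simp: n_def\<close>)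
qed

lemma continuous_lower_bound_near_zero:
  fixes K :: "real \<Rightarrow> real"
  assumes "continuous_on {0..} K" "K 0 > 0"
  shows "\<exists>\<delta>>0. \<forall>t. 0 \<le> t \<and> t \<le> \<delta> \<longrightarrow> K 0 / 2 \<le> K t"
proof -
  have "continuous (at 0 within {0..}) K"
    using assms(1) continuous_on_eq_continuous_within by auto
  then obtain d where d: "d > 0" "\<And>t. t \<in> {0..} \<Longrightarrow> dist t 0 < d \<Longrightarrow> dist (K t) (K 0) < K 0 / 2"
    using assms(2) unfolding continuous_within_eps_delta by (metis half_gt_zero)
  have "K 0 / 2 \<le> K t" if "0 \<le> t" "t \<le> d/2" for t
  proof -
    have "dist (K t) (K 0) < K 0 / 2" using d that by (simp add: dist_real_def)
    then show ?thesis unfolding dist_real_def by arith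
  qed
  then show ?thesis using d(1) by (intro exI[of _ "d/2"]) auto
qed

lemma radial_solutions_uniformly_bounded:
  fixes K :: "real \<Rightarrow> real"
  assumes dim: "CARD('n::finite) \<ge> 3" and K_cont: "continuous_on {0..} K"
    and K_bdd: "bounded (K ` {0..})" and K_nonneg: "\<And>t. t \<ge> 0 \<Longrightarrow> K t \<ge> 0" and K_pos: "K 0 > 0"
  shows "\<exists>M>0. \<forall>v :: real^'n \<Rightarrow> real. C2_on_UNIV v \<and> radially_symmetric v \<and> (\<forall>x. v x \<ge> 0) \<and>
           (\<forall>x. laplacian v x + K (norm x) * v x powr (real CARD('n) / (real CARD('n) - 2)) = 0)
           \<longrightarrow> (\<forall>x. v x \<le> M)"
proof -
  obtain B where K_upper: "\<And>t. t \<ge> 0 \<Longrightarrow> K t \<le> B"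
    using K_bdd unfolding bounded_real by (meson abs_le_D1 atLeast_iff image_eqI)
  obtain \<delta> where "\<delta> > 0" and K_lower: "\<And>t. 0 \<le> t \<Longrightarrow> t \<le> \<delta> \<Longrightarrow> K 0 / 2 \<le> K t"
    using continuous_lower_bound_near_zero[OF K_cont K_pos] by auto
  obtain M where "M > 0" and M: "\<And>\<phi> w. radial_flux CARD('n) K (real CARD('n) / (real CARD('n) - 2)) \<phi> w
      \<Longrightarrow> \<forall>t\<ge>0. \<phi> t \<le> M"
    using radial_flux_profile_bounded[where K = K and k = "K 0 / 2", OF dim _ \<open>\<delta> > 0\<close> K_upper K_lower] K_pos
    by auto
  show ?thesis
  proof (intro exI[of _ M] conjI allI impI \<open>M > 0\<close>)
    fix v :: "real^'n \<Rightarrow> real" and x :: "real^'n"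
    assume v: "C2_on_UNIV v \<and> radially_symmetric v \<and> (\<forall>x. v x \<ge> 0) \<and>
      (\<forall>x. laplacian v x + K (norm x) * v x powr (real CARD('n) / (real CARD('n) - 2)) = 0)"
    then have flux: "radial_flux CARD('n) K (real CARD('n) / (real CARD('n) - 2)) (\<lambda>t. v (t *\<^sub>R axis i 1))
        (\<lambda>t. -(t^(CARD('n) - 1) * partial_deriv v i (t *\<^sub>R axis i 1)))" for i
      using dim K_nonneg by (intro radial_solution_flux) auto
    have "v (norm x *\<^sub>R axis i 1) \<le> M" for i
      using M[OF flux[of i], rule_format, of "norm x"] by simp
    then show "v x \<le> M" using radial_profile v by metis
  qed
qed

theorem proposition7p2:
  fixes K0 :: "real \<Rightarrow> real"
  assumes dim: "CARD('n::finite) \<ge> 3"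
    and K0_cont: "continuous_on {0..} K0"
    and K0_bdd: "bounded (K0 ` {0..})"
    and K0_nonneg: "\<forall>t\<ge>0. K0 t \<ge> 0"
    and K0_pos: "K0 0 > 0"
  shows "\<exists>M>0. \<forall>(\<beta>::real) (v::real^'n \<Rightarrow> real).
           \<beta> > 0 \<and> C2_on_UNIV v \<and> radially_symmetric v \<and> (\<forall>x. v x \<ge> 0) \<and>
           (\<forall>x. laplacian v x + K0 (norm x) * v x powr (real CARD('n) / (real CARD('n) - 2)) = 0) \<and>
           (v \<longlongrightarrow> \<beta>) at_infinity
           \<longrightarrow> (\<forall>x. v x \<le> M)"
proof -
  from K0_nonneg have "\<And>t. t \<ge> 0 \<Longrightarrow> K0 t \<ge> 0" by blast
  from radial_solutions_uniformly_bounded[OF dim K0_cont K0_bdd this K0_pos]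
  obtain M where "M > 0" and bound: "\<forall>v :: real^'n \<Rightarrow> real. C2_on_UNIV v \<and> radially_symmetric v \<and>
      (\<forall>x. v x \<ge> 0) \<and> (\<forall>x. laplacian v x + K0 (norm x) * v x powr (real CARD('n) / (real CARD('n) - 2)) = 0)
      \<longrightarrow> (\<forall>x. v x \<le> M)"
    by blast
  show ?thesis using \<open>M > 0\<close> bound by blast
qed

end
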